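(* For every integer $n\geq 1$ there are integers $\gamma^S_{n,k}$, $0\le k\le\lfloor (n-1)/2\rfloor$, such that $$S_n(t):=\sum_{\pi\in\mathfrak{S}_n(2413,3142)}t^{\mathrm{des}(\pi)}=\sum_{k=0}^{\lfloor\frac{n-1}{2}\rfloor}\gamma_{n,k}^S\, t^k (1+t)^{n-1-2k},$$ where $$\gamma_{n,k}^S=\#\{\pi \in \mathfrak{S}_n(3142, 2413): \mathrm{dd}(\pi)=0,\ \mathrm{des}(\pi)=k\}.$$ In particular, the polynomial $S_n(t)$ is $\gamma$-positive for $n\geq 1$, and hence palindromic and unimodal.
   Context: $\mathfrak{S}_n$ is the set of permutations of $[n]=\{1,\dots,n\}$, written in one-line notation $\pi=\pi_1\cdots\pi_n$. A permutation $\pi$ contains a pattern $\sigma$ if some (not necessarily consecutive) subsequence of $\pi$ has the same relative order as $\sigma$; otherwise it avoids $\sigma$. $\mathfrak{S}_n(2413,3142)$ is the set of permutations in $\mathfrak{S}_n$ avoiding both $2413$ and $3142$ (separable permutations). With the convention $\pi_0=\pi_{n+1}=+\infty$, an index $i\in[n]$ is a descent if $\pi_i>\pi_{i+1}$ and a double descent if $\pi_{i-1}>\pi_i>\pi_{i+1}$; $\mathrm{des}(\pi)$ and $\mathrm{dd}(\pi)$ denote the numbers of descents and double descents. A polynomial is $\gamma$-positive of darga $m$ if it can be written as $\sum_k \gamma_k t^k(1+t)^{m-2k}$ with all $\gamma_k\ge 0$. A polynomial $\sum h_it^i$ is unimodal if $h_0\le\cdots\le h_c\ge h_{c+1}\ge\cdots$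 for some $c$. *)

theory Defs
  imports "HOL-Combinatorics.Multiset_Permutations"
          "HOL-Computational_Algebra.Polynomial"
          "HOL-Library.Extended_Nat"
begin

text \<open>Permutations of [n] in one-line notation are lists w = [pi_1, ..., pi_n]
  (0-based list indexing: pi_i = w ! (i-1)).\<close>

definition contains_pattern :: "nat list \<Rightarrow> nat list \<Rightarrow> bool" where
  "contains_pattern w sigma \<longleftrightarrow>
     (\<exists>is. length is = length sigma \<and> sorted_wrt (<) is \<and> (\<forall>j\<in>set is. j < length w) \<and>
       (\<forall>a<length sigma. \<forall>b<length sigma. (w ! (is ! a) < w ! (is ! b) \<longleftrightarrow> sigma ! a < sigma ! b)))"

definition avoids :: "nat list \<Rightarrow> nat list \<Rightarrow> bool" where
  "avoids w sigma \<longleftrightarrow> \<not> contains_pattern w sigma"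

definition separable_perms :: "nat \<Rightarrow> nat list set" where
  "separable_perms n = {w \<in> permutations_of_set {1..n}. avoids w [2,4,1,3] \<and> avoids w [3,1,4,2]}"

definition pval :: "nat list \<Rightarrow> nat \<Rightarrow> enat" where
  "pval w i = (if 1 \<le> i \<and> i \<le> length w then enat (w ! (i - 1)) else \<infinity>)"

definition des :: "nat list \<Rightarrow> nat" where
  "des w = card {i \<in> {1..length w}. pval w i > pval w (i + 1)}"

definition dd :: "nat list \<Rightarrow> nat" where
  "dd w = card {i \<in> {1..length w}. pval w (i - 1) > pval w i \<and> pval w i > pval w (i + 1)}"

definition S_poly :: "nat \<Rightarrow> int poly" where
  "S_poly n = (\<Sum>w\<in>separable_perms n. monom 1 (des w))"

definition gammaS :: "nat \<Rightarrow> nat \<Rightarrow> nat" where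
  "gammaS n k = card {w \<in> separable_perms n. dd w = 0 \<and> des w = k}"

definition gamma_positive :: "int poly \<Rightarrow> nat \<Rightarrow> bool" where
  "gamma_positive p m \<longleftrightarrow>
     (\<exists>g :: nat \<Rightarrow> int. (\<forall>k. g k \<ge> 0) \<and>
        p = (\<Sum>k\<in>{0..m div 2}. smult (g k) (monom 1 k * [:1, 1:] ^ (m - 2 * k))))"

definition palindromic :: "int poly \<Rightarrow> nat \<Rightarrow> bool" where
  "palindromic p m \<longleftrightarrow> degree p \<le> m \<and> (\<forall>i\<le>m. coeff p i = coeff p (m - i))"

definition unimodal :: "int poly \<Rightarrow> bool" where
  "unimodal p \<longleftrightarrow> (\<exists>c\<le>degree p. (\<forall>i<c. coeff p i \<le> coeff p (i + 1)) \<and>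
                                   (\<forall>i. c \<le> i \<and> i < degree p \<longrightarrow> coeff p (i + 1) \<le> coeff p i))"

end

theory Submission
  imports Defs "HOL-Computational_Algebra.Formal_Power_Series"
begin

text \<open>
  Weigh each letter of a permutation by its type, with the conventions \<open>\<pi>\<^sub>0 = \<pi>\<^sub>n\<^sub>+\<^sub>1 = \<infinity>\<close>:
  valleys by \<open>1\<close>, double descents by \<open>v\<close>, double ascents by \<open>u\<close> and peaks by \<open>t\<close>.  A separable
  permutation of length at least 2 is either a direct sum whose first block is
  sum-indecomposable or a skew sum whose first block is skew-indecomposable, uniquely, and the
  weight is multiplicative over such decompositions once the neighbour types at the cut are
  recorded.  This gives a system of equations for the generating functions of the total
  weights under the four boundary conventions; eliminating the auxiliary series leaves a cubic
  equation for the main one in which \<open>u\<close> and \<open>v\<close> occur only through \<open>u + v\<close>, and this cubic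
  has a unique solution without constant term.  So the total weight does not change under
  \<open>(t, u, v) \<mapsto> (t, u + v, 0)\<close>.  At \<open>(t, 1, t)\<close> the weight of \<open>\<pi>\<close> is \<open>t\<^bsup>des \<pi>\<^esup>\<close>; at
  \<open>(t, 1 + t, 0)\<close> it is \<open>t\<^bsup>des \<pi>\<^esup> (1 + t)\<^bsup>n - 1 - 2 des \<pi>\<^esup>\<close> if \<open>\<pi>\<close> has no double descent and \<open>0\<close>
  otherwise.  Palindromicity and unimodality hold for any nonnegative combination of the
  \<open>t\<^sup>k (1 + t)\<^bsup>m - 2k\<^esup>\<close>, all of which are symmetric and unimodal about \<open>m / 2\<close>.
\<close>

section \<open>Separable permutations and their decompositions\<close>

text \<open>Values \<open>a b c d\<close> at increasing positions form an occurrence of \<open>2413\<close> or of \<open>3142\<close>.\<close>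

definition forbidden_quadruple :: "nat \<Rightarrow> nat \<Rightarrow> nat \<Rightarrow> nat \<Rightarrow> bool" where
  "forbidden_quadruple a b c d \<longleftrightarrow> c < a \<and> a < d \<and> d < b \<or> b < d \<and> d < a \<and> a < c"

definition separable :: "nat list \<Rightarrow> bool" where
  "separable w \<longleftrightarrow> \<not> (\<exists>i0 i1 i2 i3. i0 < i1 \<and> i1 < i2 \<and> i2 < i3 \<and> i3 < length w \<and>
      forbidden_quadruple (w!i0) (w!i1) (w!i2) (w!i3))"

lemma not_separableI:
  assumes "i0 < i1" "i1 < i2" "i2 < i3" "i3 < length w"
    and "forbidden_quadruple (w!i0) (w!i1) (w!i2) (w!i3)"
  shows "\<not> separable w"
  using assms unfolding separable_def by blast

lemma contains_pattern_length_4E: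
  assumes "contains_pattern w \<sigma>" "length \<sigma> = 4"
  obtains a b c d where "a < b" "b < c" "c < d" "d < length w"
    "\<forall>x<4. \<forall>y<4. w ! ([a,b,c,d] ! x) < w ! ([a,b,c,d] ! y) \<longleftrightarrow> \<sigma> ! x < \<sigma> ! y"
proof -
  from assms(1) obtain "is" where l: "length is = length \<sigma>" and s: "sorted_wrt (<) is"
    and b: "\<forall>j\<in>set is. j < length w"
    and p: "\<forall>a<length \<sigma>. \<forall>b<length \<sigma>. w ! (is ! a) < w ! (is ! b) \<longleftrightarrow> \<sigma> ! a < \<sigma> ! b"
    unfolding contains_pattern_def by blast
  from l assms(2) obtain a b c d where "is = [a,b,c,d]"
    by (auto simp: numeral_eq_Suc length_Suc_conv)
  with s b p assms(2) show ?thesis by (intro that[of a b c d]) auto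
qed

lemma contains_pattern_length_4I:
  assumes "a < b" "b < c" "c < d" "d < length w" "length \<sigma> = 4"
    "\<forall>x<4. \<forall>y<4. w ! ([a,b,c,d] ! x) < w ! ([a,b,c,d] ! y) \<longleftrightarrow> \<sigma> ! x < \<sigma> ! y"
  shows "contains_pattern w \<sigma>"
  unfolding contains_pattern_def using assms by (intro exI[of _ "[a,b,c,d]"]) auto

lemma all_less_4_iff: "(\<forall>x<(4::nat). P x) \<longleftrightarrow> P 0 \<and> P 1 \<and> P 2 \<and> P 3"
  by (auto simp: less_Suc_eq numeral_eq_Suc)

lemma contains_2413_iff: "contains_pattern w [2,4,1,3] \<longleftrightarrow>
    (\<exists>a b c d. a < b \<and> b < c \<and> c < d \<and> d < length w \<and> w!c < w!a \<and> w!a < w!d \<and> w!d < w!b)"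
proof
  assume "contains_pattern w [2,4,1,3]"
  then obtain a b c d where "a < b" "b < c" "c < d" "d < length w"
    and "\<forall>x<4. \<forall>y<4. w ! ([a,b,c,d] ! x) < w ! ([a,b,c,d] ! y) \<longleftrightarrow> [2,4,1,3::nat] ! x < [2,4,1,3] ! y"
    by (rule contains_pattern_length_4E) simp
  then show "\<exists>a b c d. a < b \<and> b < c \<and> c < d \<and> d < length w \<and> w!c < w!a \<and> w!a < w!d \<and> w!d < w!b"
    unfolding all_less_4_iff by (intro exI[of _ a] exI[of _ b] exI[of _ c] exI[of _ d]) simp
next
  assume "\<exists>a b c d. a < b \<and> b < c \<and> c < d \<and> d < length w \<and> w!c < w!a \<and> w!a < w!d \<and> w!d < w!b"
  then obtain a b c d where "a < b" "b < c" "c < d" "d < length w"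
    "w!c < w!a" "w!a < w!d" "w!d < w!b" by blast
  then show "contains_pattern w [2,4,1,3]"
    by (intro contains_pattern_length_4I[of a b c d]) (auto simp: all_less_4_iff)
qed

lemma contains_3142_iff: "contains_pattern w [3,1,4,2] \<longleftrightarrow>
    (\<exists>a b c d. a < b \<and> b < c \<and> c < d \<and> d < length w \<and> w!b < w!d \<and> w!d < w!a \<and> w!a < w!c)"
proof
  assume "contains_pattern w [3,1,4,2]"
  then obtain a b c d where "a < b" "b < c" "c < d" "d < length w"
    and "\<forall>x<4. \<forall>y<4. w ! ([a,b,c,d] ! x) < w ! ([a,b,c,d] ! y) \<longleftrightarrow> [3,1,4,2::nat] ! x < [3,1,4,2] ! y"
    by (rule contains_pattern_length_4E) simp
  then show "\<exists>a b c d. a < b \<and> b < c \<and> c < d \<and> d < length w \<and> w!b < w!d \<and> w!d < w!a \<and> w!a < w!c"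
    unfolding all_less_4_iff by (intro exI[of _ a] exI[of _ b] exI[of _ c] exI[of _ d]) simp
next
  assume "\<exists>a b c d. a < b \<and> b < c \<and> c < d \<and> d < length w \<and> w!b < w!d \<and> w!d < w!a \<and> w!a < w!c"
  then obtain a b c d where "a < b" "b < c" "c < d" "d < length w"
    "w!b < w!d" "w!d < w!a" "w!a < w!c" by blast
  then show "contains_pattern w [3,1,4,2]"
    by (intro contains_pattern_length_4I[of a b c d]) (auto simp: all_less_4_iff)
qed

lemma separable_perms_eq: "separable_perms n = {w \<in> permutations_of_set {1..n}. separable w}"
  unfolding separable_perms_def separable_def avoids_def contains_2413_iff contains_3142_iff
    forbidden_quadruple_def by (simp add: conj_disj_distribL ex_disj_distrib)

lemma separable_order_embedding:
  assumes "separable w"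
    and "\<And>i. i < length v \<Longrightarrow> g i < length w"
    and "\<And>i j. i < j \<Longrightarrow> j < length v \<Longrightarrow> g i < g j"
    and "\<And>i j. i < length v \<Longrightarrow> j < length v \<Longrightarrow> w!(g i) < w!(g j) \<longleftrightarrow> v!i < v!j"
  shows "separable v"
  unfolding separable_def
proof
  assume "\<exists>i0 i1 i2 i3. i0 < i1 \<and> i1 < i2 \<and> i2 < i3 \<and> i3 < length v \<and>
      forbidden_quadruple (v!i0) (v!i1) (v!i2) (v!i3)"
  then obtain i0 i1 i2 i3 where i: "i0 < i1" "i1 < i2" "i2 < i3" "i3 < length v"
    and f: "forbidden_quadruple (v!i0) (v!i1) (v!i2) (v!i3)" by blast
  from f i have "forbidden_quadruple (w!(g i0)) (w!(g i1)) (w!(g i2)) (w!(g i3))"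
    unfolding forbidden_quadruple_def by (simp add: assms(4))
  with i assms(2,3) have "\<not> separable w" by (intro not_separableI) auto
  with assms(1) show False by contradiction
qed

lemma separable_take: "separable w \<Longrightarrow> separable (take k w)"
  by (rule separable_order_embedding[where g=id]) auto

lemma separable_drop: "separable w \<Longrightarrow> separable (drop k w)"
  by (rule separable_order_embedding[where g="\<lambda>i. k + i"]) auto

lemma separable_map_strict_mono:
  assumes "strict_mono (f :: nat \<Rightarrow> nat)"
  shows "separable (map f w) \<longleftrightarrow> separable w"
proof
  assume "separable (map f w)"
  then show "separable w"
    by (rule separable_order_embedding[where g=id]) (auto simp: strict_mono_less[OF assms])
next
  assume "separable w"
  then show "separable (map f w)"
    by (rule separable_order_embedding[where g=id]) (auto simp: strict_mono_less[OF assms])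
qed

lemma forbidden_quadruple_rev: "forbidden_quadruple d c b a \<longleftrightarrow> forbidden_quadruple a b c d"
  unfolding forbidden_quadruple_def by auto

lemma separable_rev [simp]: "separable (rev w) \<longleftrightarrow> separable w"
proof -
  have "\<not> separable w" if "\<not> separable (rev w)" for w :: "nat list"
  proof -
    from that obtain i0 i1 i2 i3 where i: "i0 < i1" "i1 < i2" "i2 < i3" "i3 < length w"
      and f: "forbidden_quadruple (rev w!i0) (rev w!i1) (rev w!i2) (rev w!i3)"
      unfolding separable_def by auto
    from i f show "\<not> separable w"
      by (intro not_separableI[of "length w - Suc i3" "length w - Suc i2" "length w - Suc i1"
          "length w - Suc i0"]) (simp_all add: rev_nth forbidden_quadruple_rev)
  qed
  from this[of w] this[of "rev w"] show ?thesis by auto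
qed

definition sum_split :: "nat list \<Rightarrow> nat \<Rightarrow> bool" where
  "sum_split w k \<longleftrightarrow> (\<forall>i j. i < k \<longrightarrow> k \<le> j \<longrightarrow> j < length w \<longrightarrow> w!i < w!j)"

definition skew_split :: "nat list \<Rightarrow> nat \<Rightarrow> bool" where
  "skew_split w k \<longleftrightarrow> (\<forall>i j. i < k \<longrightarrow> k \<le> j \<longrightarrow> j < length w \<longrightarrow> w!j < w!i)"

definition sum_decomposable :: "nat list \<Rightarrow> bool" where
  "sum_decomposable w \<longleftrightarrow> (\<exists>k. 0 < k \<and> k < length w \<and> sum_split w k)"

definition skew_decomposable :: "nat list \<Rightarrow> bool" where
  "skew_decomposable w \<longleftrightarrow> (\<exists>k. 0 < k \<and> k < length w \<and> skew_split w k)"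

lemma not_sum_and_skew_decomposable: "\<not> (sum_decomposable w \<and> skew_decomposable w)"
proof
  assume "sum_decomposable w \<and> skew_decomposable w"
  then obtain k l where "0 < k" "k < length w" "sum_split w k" "0 < l" "l < length w" "skew_split w l"
    unfolding sum_decomposable_def skew_decomposable_def by blast
  then have "w!0 < w!(length w - 1)" "w!(length w - 1) < w!0"
    unfolding sum_split_def skew_split_def by auto
  then show False by simp
qed

lemma skew_split_rev: "skew_split (rev w) k \<longleftrightarrow> sum_split w (length w - k)"
  unfolding skew_split_def sum_split_def
proof (intro iffI allI impI)
  fix i j
  assume H: "\<forall>i j. i < k \<longrightarrow> k \<le> j \<longrightarrow> j < length (rev w) \<longrightarrow> rev w ! j < rev w ! i"
    and ij: "i < length w - k" "length w - k \<le> j" "j < length w"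
  from H[rule_format, of "length w - Suc j" "length w - Suc i"] ij show "w!i < w!j"
    by (simp add: rev_nth)
next
  fix i j
  assume H: "\<forall>i j. i < length w - k \<longrightarrow> length w - k \<le> j \<longrightarrow> j < length w \<longrightarrow> w!i < w!j"
    and ij: "i < k" "k \<le> j" "j < length (rev w)"
  from H[rule_format, of "length w - Suc j" "length w - Suc i"] ij show "rev w ! j < rev w ! i"
    by (simp add: rev_nth)
qed

lemma sum_decomposable_rev [simp]: "sum_decomposable (rev w) \<longleftrightarrow> skew_decomposable w"
proof -
  have "skew_decomposable (rev v) \<longleftrightarrow> sum_decomposable v" for v :: "nat list"
    unfolding skew_decomposable_def sum_decomposable_def skew_split_rev
    by (metis diff_diff_cancel length_rev less_imp_le_nat zero_less_diff)
  from this[of "rev w"] show ?thesis by simp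
qed

lemma separable_sum_split:
  assumes "sum_split w k" "separable (take k w)" "separable (drop k w)"
  shows "separable w"
  unfolding separable_def
proof
  assume "\<exists>i0 i1 i2 i3. i0 < i1 \<and> i1 < i2 \<and> i2 < i3 \<and> i3 < length w \<and>
      forbidden_quadruple (w!i0) (w!i1) (w!i2) (w!i3)"
  then obtain i0 i1 i2 i3 where i: "i0 < i1" "i1 < i2" "i2 < i3" "i3 < length w"
    and f: "forbidden_quadruple (w!i0) (w!i1) (w!i2) (w!i3)" by blast
  have "\<not> i3 < k"
  proof
    assume "i3 < k"
    with i f have "\<not> separable (take k w)" by (intro not_separableI[of i0 i1 i2 i3]) simp_all
    with assms(2) show False by contradiction
  qed
  moreover have "\<not> k \<le> i0"
  proof
    assume "k \<le> i0"
    with i f have "\<not> separable (drop k w)"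
      by (intro not_separableI[of "i0 - k" "i1 - k" "i2 - k" "i3 - k"]) simp_all
    with assms(3) show False by contradiction
  qed
  moreover have lt: "w!i < w!j" if "i < k" "k \<le> j" "j < length w" for i j
    using assms(1) that unfolding sum_split_def by blast
  ultimately have "i0 < k" "k \<le> i3" by simp_all
  show False
  proof (cases "i1 < k")
    case True
    with i \<open>k \<le> i3\<close> have "w!i1 < w!i3" "w!i0 < w!i3" by (simp_all add: lt)
    with f show False unfolding forbidden_quadruple_def by linarith
  next
    case False
    with i \<open>i0 < k\<close> \<open>k \<le> i3\<close> have "w!i0 < w!i2" "w!i0 < w!i3" by (simp_all add: lt)
    with f show False unfolding forbidden_quadruple_def by linarith
  qed
qed

definition del_nth :: "nat \<Rightarrow> 'a list \<Rightarrow> 'a list" where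
  "del_nth p xs = take p xs @ drop (Suc p) xs"

lemma length_del_nth [simp]: "p < length xs \<Longrightarrow> length (del_nth p xs) = length xs - 1"
  by (simp add: del_nth_def)

lemma nth_del_nth:
  "p < length xs \<Longrightarrow> i < length xs - 1 \<Longrightarrow> del_nth p xs ! i = (if i < p then xs ! i else xs ! Suc i)"
  by (auto simp: del_nth_def nth_append min_def)

lemma rev_del_nth: "p < length xs \<Longrightarrow> rev (del_nth p xs) = del_nth (length xs - Suc p) (rev xs)"
  by (simp add: del_nth_def rev_take rev_drop Suc_diff_Suc)

lemma distinct_del_nth: "distinct xs \<Longrightarrow> distinct (del_nth p xs)"
  by (simp add: del_nth_def set_take_disj_set_drop_if_distinct)

lemma separable_del_nth: "separable w \<Longrightarrow> p < length w \<Longrightarrow> separable (del_nth p w)"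
  by (rule separable_order_embedding[where g="\<lambda>i. if i < p then i else Suc i"])
    (auto simp: nth_del_nth)

text \<open>Deleting the maximum of a separable permutation leaves a direct sum \<open>x \<oplus> y\<close>.  If the
  maximum was in \<open>y\<close>, the split survives; if it was the first letter, it splits off a skew sum;
  otherwise it splits \<open>x\<close> into a part below and a part above, since any inversion across it
  together with the maximum and a letter of \<open>y\<close> would form a \<open>2413\<close>.\<close>

lemma sum_split_insert_max_right:
  assumes p: "p < length w" and max: "\<And>i. i < length w \<Longrightarrow> i \<noteq> p \<Longrightarrow> w!i < w!p"
    and split: "sum_split (del_nth p w) k" and "k \<le> p"
  shows "sum_split w k"
  unfolding sum_split_def
proof (intro allI impI)
  fix i j assume ij: "i < k" "k \<le> j" "j < length w"
  have lt: "del_nth p w ! i < del_nth p w ! j" if "i < k" "k \<le> j" "j < length w - 1" for i j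
    using split that p unfolding sum_split_def by simp
  consider "j = p" | "j < p" | "p < j" by linarith
  then show "w!i < w!j"
  proof cases
    case 1
    with ij \<open>k \<le> p\<close> show ?thesis by (simp add: max)
  next
    case 2
    with ij \<open>k \<le> p\<close> p show ?thesis using lt[of i j] by (simp add: nth_del_nth)
  next
    case 3
    with ij \<open>k \<le> p\<close> p show ?thesis using lt[of i "j - 1"]
      by (cases j) (simp_all add: nth_del_nth)
  qed
qed

lemma sum_split_insert_max_left:
  assumes dist: "distinct w" and sep: "separable w" and p: "p < length w"
    and max: "\<And>i. i < length w \<Longrightarrow> i \<noteq> p \<Longrightarrow> w!i < w!p"
    and split: "sum_split (del_nth p w) k" and k: "p < k" "k < length w - 1"
  shows "sum_split w p"
proof -
  define v where "v = del_nth p w"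
  have v_nth: "v!i = (if i < p then w!i else w!Suc i)" if "i < length w - 1" for i
    using nth_del_nth[OF p] that unfolding v_def by simp
  have v_lt: "v!i < v!j" if "i < k" "k \<le> j" "j < length w - 1" for i j
    using split that p unfolding sum_split_def v_def by simp
  have no_inversion: "v!i < v!j" if "i < p" "p \<le> j" "j < k" for i j
  proof (rule ccontr)
    assume "\<not> v!i < v!j"
    moreover have "v!i \<noteq> v!j"
      using that k distinct_del_nth[OF dist] p unfolding v_def by (simp add: nth_eq_iff_index_eq)
    ultimately have "v!j < v!i" by simp
    moreover have "v!i = w!i" "v!j = w!Suc j" "v!k = w!Suc k" "v!i < v!k"
      using that k v_nth v_lt[of i k] by auto
    ultimately have "w!Suc j < w!i" "w!i < w!Suc k" by simp_all
    moreover have "w!Suc k < w!p" using max[of "Suc k"] k by simp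
    ultimately have "forbidden_quadruple (w!i) (w!p) (w!Suc j) (w!Suc k)"
      unfolding forbidden_quadruple_def by blast
    with that k have "\<not> separable w" by (intro not_separableI[of i p "Suc j" "Suc k"]) simp_all
    with sep show False by contradiction
  qed
  show "sum_split w p" unfolding sum_split_def
  proof (intro allI impI)
    fix i j assume ij: "i < p" "p \<le> j" "j < length w"
    consider "j = p" | "p < j" "j \<le> k" | "k < j" using ij by linarith
    then show "w!i < w!j"
    proof cases
      case 1
      with ij show ?thesis by (simp add: max)
    next
      case 2
      with ij k show ?thesis using no_inversion[of i "j - 1"] v_nth[of i] v_nth[of "j - 1"] by simp
    next
      case 3
      with ij k show ?thesis using v_lt[of i "j - 1"] v_nth[of i] v_nth[of "j - 1"] by simp
    qed
  qed
qed

lemma decomposable_insert_max: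
  assumes "distinct w" "separable w" "p < length w"
    and max: "\<And>i. i < length w \<Longrightarrow> i \<noteq> p \<Longrightarrow> w!i < w!p"
    and "sum_decomposable (del_nth p w)"
  shows "sum_decomposable w \<or> skew_decomposable w"
proof -
  from assms(3,5) obtain k where k: "0 < k" "k < length w - 1" "sum_split (del_nth p w) k"
    unfolding sum_decomposable_def by auto
  consider "k \<le> p" | "p = 0" | "0 < p" "p < k" by linarith
  then show ?thesis
  proof cases
    case 1
    with k show ?thesis using sum_split_insert_max_right[OF assms(3) max k(3)]
      unfolding sum_decomposable_def by auto
  next
    case 2
    then have "skew_split w 1" using max unfolding skew_split_def by auto
    with k show ?thesis unfolding skew_decomposable_def by auto
  next
    case 3
    with k assms show ?thesis using sum_split_insert_max_left[OF assms(1-3) max k(3)]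
      unfolding sum_decomposable_def by auto
  qed
qed

theorem separable_decomposable:
  assumes "distinct w" "separable w" "2 \<le> length w"
  shows "sum_decomposable w \<or> skew_decomposable w"
  using assms
proof (induction "length w" arbitrary: w rule: less_induct)
  case less
  show ?case
  proof (cases "length w = 2")
    case True
    with less.prems have "w!0 \<noteq> w!1" by (simp add: nth_eq_iff_index_eq)
    then have "w!0 < w!1 \<or> w!1 < w!0" by linarith
    moreover have "sum_split w 1 \<longleftrightarrow> w!0 < w!1" "skew_split w 1 \<longleftrightarrow> w!1 < w!0"
      using True unfolding sum_split_def skew_split_def by (auto simp: numeral_2_eq_2 less_Suc_eq)
    ultimately show ?thesis using True unfolding sum_decomposable_def skew_decomposable_def by auto
  next
    case False
    from less.prems have "Max (set w) \<in> set w" by (intro Max_in) auto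
    then obtain p where p: "p < length w" "w!p = Max (set w)" by (auto simp: in_set_conv_nth)
    have max: "w!i < w!p" if "i < length w" "i \<noteq> p" for i
    proof -
      from that p(1) less.prems(1) have "w!i \<noteq> w!p" by (simp add: nth_eq_iff_index_eq)
      moreover from that p have "w!i \<le> w!p" by simp
      ultimately show ?thesis by simp
    qed
    have "sum_decomposable (del_nth p w) \<or> skew_decomposable (del_nth p w)"
      using less.hyps[of "del_nth p w"] less.prems False p
      by (simp add: distinct_del_nth separable_del_nth)
    then show ?thesis
    proof
      assume "sum_decomposable (del_nth p w)"
      then show ?thesis using decomposable_insert_max[OF less.prems(1,2) p(1) max] by blast
    next
      assume "skew_decomposable (del_nth p w)"
      then have "sum_decomposable (del_nth (length w - Suc p) (rev w))"
        by (simp flip: rev_del_nth[OF p(1)])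
      moreover have "rev w ! i < rev w ! (length w - Suc p)"
        if "i < length (rev w)" "i \<noteq> length w - Suc p" for i
        using that max[of "length w - Suc i"] p by (simp add: rev_nth)
      ultimately have "sum_decomposable (rev w) \<or> skew_decomposable (rev w)"
        using less.prems p by (intro decomposable_insert_max) simp_all
      then show ?thesis using sum_decomposable_rev[of "rev w"] by auto
    qed
  qed
qed

section \<open>Direct sums and complements of permutations\<close>

abbreviation perms :: "nat \<Rightarrow> nat list set" where
  "perms n \<equiv> permutations_of_set {1..n}"

lemma perms_iff: "w \<in> permutations_of_set A \<longleftrightarrow> set w = A \<and> distinct w"
  by (simp add: permutations_of_set_def)

lemma length_perms: "w \<in> perms n \<Longrightarrow> length w = n"
  using length_finite_permutations_of_set by fastforce

lemma perms_nth_bounds: "w \<in> perms n \<Longrightarrow> i < length w \<Longrightarrow> 1 \<le> w!i \<and> w!i \<le> n"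
  using nth_mem[of i w] by (auto simp: perms_iff)

lemma separable_perms_iff: "w \<in> separable_perms n \<longleftrightarrow> w \<in> perms n \<and> separable w"
  by (simp add: separable_perms_eq)

lemma finite_separable_perms: "finite (separable_perms n)"
  by (rule finite_subset[of _ "perms n"]) (auto simp: separable_perms_iff)

definition direct_sum :: "nat list \<Rightarrow> nat list \<Rightarrow> nat list" where
  "direct_sum a b = a @ map (\<lambda>x. x + length a) b"

lemma direct_sum_perms:
  assumes "a \<in> perms m" "b \<in> perms k"
  shows "direct_sum a b \<in> perms (m + k)"
proof -
  have "(\<lambda>x. x + m) ` {1..k} = {m+1..m+k}"
    by (auto simp: image_iff intro!: bexI[where x="_ - m"])
  moreover have "inj (\<lambda>x::nat. x + m)" by (simp add: inj_on_def)
  ultimately show ?thesis using assms length_perms[OF assms(1)]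
    by (auto simp: perms_iff direct_sum_def distinct_map inj_on_subset)
qed

lemma sum_split_direct_sum:
  assumes "a \<in> perms m" "b \<in> perms k"
  shows "sum_split (direct_sum a b) m"
  unfolding sum_split_def
proof (intro allI impI)
  fix i j assume ij: "i < m" "m \<le> j" "j < length (direct_sum a b)"
  have la: "length a = m" "length b = k" using length_perms assms by auto
  with ij have "direct_sum a b ! i = a!i" "direct_sum a b ! j = b!(j - m) + m"
    by (auto simp: direct_sum_def nth_append)
  moreover have "a!i \<le> m" using perms_nth_bounds[OF assms(1)] ij la by auto
  moreover have "1 \<le> b!(j - m)"
    using perms_nth_bounds[OF assms(2), of "j - m"] ij la by (simp add: direct_sum_def)
  ultimately show "direct_sum a b ! i < direct_sum a b ! j" by simp
qed

lemma separable_direct_sum: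
  assumes "a \<in> perms m" "b \<in> perms k" "separable a" "separable b"
  shows "separable (direct_sum a b)"
proof (rule separable_sum_split[OF sum_split_direct_sum[OF assms(1,2)]])
  have la: "length a = m" using length_perms assms by auto
  with assms show "separable (take m (direct_sum a b))" by (simp add: direct_sum_def)
  have "strict_mono (\<lambda>x::nat. x + m)" by (simp add: strict_mono_def)
  with la assms show "separable (drop m (direct_sum a b))"
    by (simp add: direct_sum_def separable_map_strict_mono)
qed

lemma sum_split_take_perms:
  assumes "w \<in> perms n" "sum_split w k" "k \<le> n"
  shows "set (take k w) = {1..k}"
proof -
  have lw: "length w = n" using length_perms assms by auto
  have dw: "distinct w" using assms by (auto simp: perms_iff)
  have "set (take k w) \<subseteq> {1..k}"
  proof
    fix x assume "x \<in> set (take k w)"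
    then obtain i where i: "i < k" "x = w!i" using lw assms(3) by (auto simp: in_set_conv_nth)
    have x: "1 \<le> x" "x \<le> n" using perms_nth_bounds[OF assms(1), of i] i lw assms(3) by auto
    have "set (drop k w) \<subseteq> {x<..n}"
    proof
      fix y assume "y \<in> set (drop k w)"
      then obtain j where j: "j < n - k" "y = w!(k + j)" using lw by (auto simp: in_set_conv_nth)
      then have "x < y" using assms(2) i lw unfolding sum_split_def by auto
      moreover have "y \<le> n" using perms_nth_bounds[OF assms(1), of "k + j"] j lw by auto
      ultimately show "y \<in> {x<..n}" by auto
    qed
    then have "card (set (drop k w)) \<le> card {x<..n}" by (intro card_mono) auto
    moreover have "card (set (drop k w)) = n - k" using dw lw by (simp add: distinct_card)
    ultimately show "x \<in> {1..k}" using x by simp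
  qed
  moreover have "card (set (take k w)) = k" using dw lw assms(3) by (simp add: distinct_card)
  ultimately show ?thesis by (simp add: card_subset_eq)
qed

lemma sum_split_direct_sumE:
  assumes "w \<in> perms n" "sum_split w k" "k \<le> n"
  obtains a b where "a \<in> perms k" "b \<in> perms (n - k)" "w = direct_sum a b"
    "a = take k w" "b = map (\<lambda>x. x - k) (drop k w)"
proof -
  have lw: "length w = n" using length_perms assms by auto
  have dw: "distinct w" and sw: "set w = {1..n}" using assms by (auto simp: perms_iff)
  have st: "set (take k w) = {1..k}" by (rule sum_split_take_perms[OF assms])
  have un: "set (take k w) \<union> set (drop k w) = {1..n}"
    using sw set_append[of "take k w" "drop k w", symmetric] by simp
  have disj: "set (take k w) \<inter> set (drop k w) = {}"
    using dw by (simp add: set_take_disj_set_drop_if_distinct)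
  have sd: "set (drop k w) = {k<..n}"
  proof (rule set_eqI)
    fix x
    have "x \<in> set (drop k w) \<longleftrightarrow> x \<in> {1..n} \<and> x \<notin> set (take k w)" using un disj by blast
    with st assms(3) show "x \<in> set (drop k w) \<longleftrightarrow> x \<in> {k<..n}" by auto
  qed
  have "(\<lambda>x. x - k) ` {k<..n} = {1..n-k}"
    by (auto simp: image_iff intro!: bexI[where x="_ + k"])
  moreover have "inj_on (\<lambda>x. x - k) {k<..n}" by (auto simp: inj_on_def)
  ultimately have b: "map (\<lambda>x. x - k) (drop k w) \<in> perms (n - k)"
    using sd dw by (simp add: perms_iff distinct_map)
  have a: "take k w \<in> perms k" using st dw by (simp add: perms_iff)
  have "map (\<lambda>x. x - k + k) (drop k w) = drop k w" using sd by (intro map_idI) auto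
  then have "w = direct_sum (take k w) (map (\<lambda>x. x - k) (drop k w))"
    unfolding direct_sum_def using lw assms(3) by (simp add: comp_def)
  from a b this show ?thesis by (rule that) simp_all
qed

definition complement :: "nat \<Rightarrow> nat list \<Rightarrow> nat list" where
  "complement n w = map (\<lambda>x. Suc n - x) w"

lemma length_complement [simp]: "length (complement n w) = length w"
  by (simp add: complement_def)

lemma complement_perms: "w \<in> perms n \<Longrightarrow> complement n w \<in> perms n"
proof -
  assume w: "w \<in> perms n"
  have "(\<lambda>x. Suc n - x) ` {1..n} = {1..n}"
  proof
    show "{1..n} \<subseteq> (\<lambda>x. Suc n - x) ` {1..n}"
    proof
      fix x assume "x \<in> {1..n}"
      then show "x \<in> (\<lambda>x. Suc n - x) ` {1..n}" by (intro image_eqI[where x="Suc n - x"]) auto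
    qed
  qed auto
  moreover have "inj_on (\<lambda>x. Suc n - x) {1..n}" by (auto simp: inj_on_def)
  ultimately show ?thesis using w by (auto simp: perms_iff complement_def distinct_map)
qed

lemma complement_complement: "w \<in> perms n \<Longrightarrow> complement n (complement n w) = w"
  unfolding complement_def by (auto simp: perms_iff intro!: map_idI)

lemma complement_nth_less:
  assumes "w \<in> perms n" "i < length w" "j < length w"
  shows "complement n w ! i < complement n w ! j \<longleftrightarrow> w!j < w!i"
  using perms_nth_bounds[OF assms(1,2)] perms_nth_bounds[OF assms(1,3)] assms
  by (auto simp: complement_def)

lemma separable_complement:
  assumes "w \<in> perms n"
  shows "separable (complement n w) \<longleftrightarrow> separable w"
proof -
  have flip: "\<not> separable (complement n v)" if v: "v \<in> perms n" "\<not> separable v" for v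
  proof -
    from v(2) obtain i0 i1 i2 i3 where i: "i0 < i1" "i1 < i2" "i2 < i3" "i3 < length v"
      and f: "forbidden_quadruple (v!i0) (v!i1) (v!i2) (v!i3)"
      unfolding separable_def by blast
    from i f have "forbidden_quadruple (complement n v ! i0) (complement n v ! i1)
        (complement n v ! i2) (complement n v ! i3)"
      unfolding forbidden_quadruple_def by (simp add: complement_nth_less[OF v(1)]) linarith
    with i show ?thesis by (intro not_separableI[of i0 i1 i2 i3]) simp_all
  qed
  show ?thesis
    using flip[OF assms] flip[OF complement_perms[OF assms]] complement_complement[OF assms]
    by auto
qed

lemma sum_split_complement:
  assumes "w \<in> perms n"
  shows "sum_split (complement n w) k \<longleftrightarrow> skew_split w k"
  unfolding sum_split_def skew_split_def using complement_nth_less[OF assms] by auto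

lemma sum_decomposable_complement:
  "w \<in> perms n \<Longrightarrow> sum_decomposable (complement n w) \<longleftrightarrow> skew_decomposable w"
  unfolding sum_decomposable_def skew_decomposable_def by (simp add: sum_split_complement)

lemma skew_decomposable_complement:
  "w \<in> perms n \<Longrightarrow> skew_decomposable (complement n w) \<longleftrightarrow> sum_decomposable w"
  using sum_decomposable_complement[OF complement_perms] by (simp add: complement_complement)

section \<open>Weights by neighbourhood type\<close>

text \<open>Each letter is weighted according to whether its left and its right neighbour is higher
  than it (valley, double descent, double ascent, peak); \<open>L\<close> and \<open>R\<close> say whether the virtual
  neighbours beyond the two ends count as higher.  Cutting a direct sum between its blocks
  makes the right end of the lower block see a higher neighbour and the left end of the upper
  block a lower one.\<close>

type_synonym letter_weight = "bool \<Rightarrow> bool \<Rightarrow> int"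

definition left_higher :: "bool \<Rightarrow> nat list \<Rightarrow> nat \<Rightarrow> bool" where
  "left_higher L w i = (if i = 0 then L else w!i < w!(i - 1))"

definition right_higher :: "bool \<Rightarrow> nat list \<Rightarrow> nat \<Rightarrow> bool" where
  "right_higher R w i = (if Suc i = length w then R else w!i < w!Suc i)"

definition weight :: "letter_weight \<Rightarrow> bool \<Rightarrow> bool \<Rightarrow> nat list \<Rightarrow> int" where
  "weight f L R w = (\<Prod>i = 0..<length w. f (left_higher L w i) (right_higher R w i))"

lemma weight_append_sum_split:
  assumes "a \<noteq> []" "c \<noteq> []" "sum_split (a @ c) (length a)"
  shows "weight f L R (a @ c) = weight f L True a * weight f False R c"
proof -
  let ?g = "\<lambda>i. f (left_higher L (a @ c) i) (right_higher R (a @ c) i)"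
  have lt: "a!i < c!j" if "i < length a" "j < length c" for i j
    using assms(3) that[unfolded less_diff_conv] unfolding sum_split_def
    by (metis le_add1 length_append add.commute nat_add_left_cancel_less nth_append
        nth_append_length_plus)
  have prefix: "?g i = f (left_higher L a i) (right_higher True a i)" if i: "i < length a" for i
  proof -
    have "right_higher R (a @ c) i = right_higher True a i"
    proof (cases "Suc i = length a")
      case True
      with i lt[of i 0] assms(2) show ?thesis unfolding right_higher_def by (auto simp: nth_append)
    qed (use i in \<open>auto simp: right_higher_def nth_append\<close>)
    moreover have "left_higher L (a @ c) i = left_higher L a i"
      using i by (simp add: left_higher_def nth_append less_imp_diff_less)
    ultimately show ?thesis by simp
  qed
  have suffix: "?g (j + length a) = f (left_higher False c j) (right_higher R c j)"
    if j: "j < length c" for j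
  proof -
    have "left_higher L (a @ c) (j + length a) = left_higher False c j"
    proof (cases "j = 0")
      case True
      with assms lt[of "length a - 1" 0] show ?thesis unfolding left_higher_def
        by (auto simp: nth_append)
    qed (use j in \<open>auto simp: left_higher_def nth_append\<close>)
    moreover have "right_higher R (a @ c) (j + length a) = right_higher R c j"
      using j by (simp add: right_higher_def nth_append)
    ultimately show ?thesis by simp
  qed
  have "weight f L R (a @ c) = prod ?g {0..<length a} * prod ?g {length a..<length a + length c}"
    unfolding weight_def by (simp add: prod.atLeastLessThan_concat)
  also have "prod ?g {0..<length a} = weight f L True a"
    unfolding weight_def by (rule prod.cong) (simp_all add: prefix)
  also have "prod ?g {length a..<length a + length c} = (\<Prod>j = 0..<length c. ?g (j + length a))"
    using prod.shift_bounds_nat_ivl[of ?g 0 "length a" "length c"] by (simp add: add.commute)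
  also have "\<dots> = weight f False R c"
    unfolding weight_def by (rule prod.cong) (simp_all add: suffix)
  finally show ?thesis .
qed

lemma weight_map_add: "weight f L R (map (\<lambda>x. x + k) w) = weight f L R w"
  unfolding weight_def left_higher_def right_higher_def by (intro prod.cong) auto

lemma weight_direct_sum:
  assumes "a \<in> perms m" "b \<in> perms k" "0 < m" "0 < k"
  shows "weight f L R (direct_sum a b) = weight f L True a * weight f False R b"
proof -
  have "length a = m" "length b = k" using length_perms assms by auto
  with assms sum_split_direct_sum[OF assms(1,2)] show ?thesis
    unfolding direct_sum_def by (subst weight_append_sum_split) (auto simp: weight_map_add)
qed

text \<open>Complementation turns higher neighbours into lower ones.\<close>

definition dual :: "letter_weight \<Rightarrow> letter_weight" where
  "dual f x y = f (\<not> x) (\<not> y)"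

lemma weight_complement:
  assumes w: "w \<in> perms n"
  shows "weight f L R (complement n w) = weight (dual f) (\<not> L) (\<not> R) w"
  unfolding weight_def
proof (rule prod.cong)
  fix i assume i: "i \<in> {0..<length w}"
  have d: "distinct w" using w by (simp add: perms_iff)
  have "left_higher L (complement n w) i \<longleftrightarrow> \<not> left_higher (\<not> L) w i"
  proof (cases "i = 0")
    case False
    then have "w!(i - 1) \<noteq> w!i" using d i by (simp add: nth_eq_iff_index_eq)
    with False i show ?thesis
      using complement_nth_less[OF w, of i "i - 1"] unfolding left_higher_def by auto
  qed (simp add: left_higher_def)
  moreover have "right_higher R (complement n w) i \<longleftrightarrow> \<not> right_higher (\<not> R) w i"
  proof (cases "Suc i = length w")
    case False
    then have "w!Suc i \<noteq> w!i" using d i by (simp add: nth_eq_iff_index_eq)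
    with False i show ?thesis
      using complement_nth_less[OF w, of i "Suc i"] unfolding right_higher_def by auto
  qed (simp add: right_higher_def)
  ultimately show "f (left_higher L (complement n w) i) (right_higher R (complement n w) i) =
      dual f (left_higher (\<not> L) w i) (right_higher (\<not> R) w i)"
    by (simp add: dual_def)
qed simp

section \<open>Weight enumerators and their recurrences\<close>

definition total_weight :: "letter_weight \<Rightarrow> bool \<Rightarrow> bool \<Rightarrow> nat \<Rightarrow> int" where
  "total_weight f L R n = (\<Sum>w\<in>separable_perms n. weight f L R w)"

definition sum_indecomposable_weight :: "letter_weight \<Rightarrow> bool \<Rightarrow> bool \<Rightarrow> nat \<Rightarrow> int" where
  "sum_indecomposable_weight f L R n =
     (\<Sum>w\<in>{w \<in> separable_perms n. \<not> sum_decomposable w}. weight f L R w)"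

definition skew_indecomposable_weight :: "letter_weight \<Rightarrow> bool \<Rightarrow> bool \<Rightarrow> nat \<Rightarrow> int" where
  "skew_indecomposable_weight f L R n =
     (\<Sum>w\<in>{w \<in> separable_perms n. \<not> skew_decomposable w}. weight f L R w)"

text \<open>A sum-decomposable permutation is uniquely \<open>x \<oplus> y\<close> with \<open>x\<close> sum-indecomposable.\<close>

definition sum_decompositions :: "nat \<Rightarrow> (nat \<times> nat list \<times> nat list) set" where
  "sum_decompositions n =
     (SIGMA a:{1..<n}. {x \<in> separable_perms a. \<not> sum_decomposable x} \<times> separable_perms (n - a))"

lemma sum_split_take:
  assumes "sum_split w k" "k < l" "l \<le> length w"
  shows "sum_split (take l w) k"
  using assms unfolding sum_split_def by auto

lemma inj_on_sum_decompositions: "inj_on (\<lambda>(a, p). direct_sum (fst p) (snd p)) (sum_decompositions n)"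
proof -
  have "a = a' \<and> x = x' \<and> y = y'"
    if d: "(a, x, y) \<in> sum_decompositions n" "(a', x', y') \<in> sum_decompositions n"
    and eq: "direct_sum x y = direct_sum x' y'" for a x y a' x' y'
  proof -
    have h: "x \<in> perms a" "y \<in> perms (n - a)" "\<not> sum_decomposable x"
      "x' \<in> perms a'" "y' \<in> perms (n - a')" "\<not> sum_decomposable x'" "0 < a" "a < n" "0 < a'" "a' < n"
      using d unfolding sum_decompositions_def by (auto simp: separable_perms_iff)
    then have lx: "length x = a" "length x' = a'" "length y = n - a" "length y' = n - a'"
      using length_perms by auto
    have split: "sum_split (direct_sum x y) a" "sum_split (direct_sum x' y') a'"
      using sum_split_direct_sum h by auto
    have tk: "take a (direct_sum x y) = x" "take a' (direct_sum x' y') = x'"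
      using lx by (auto simp: direct_sum_def)
    have len: "length (direct_sum x y) = n" using lx h by (simp add: direct_sum_def)
    have aa: "a = a'"
    proof (rule ccontr)
      assume "a \<noteq> a'"
      then consider "a < a'" | "a' < a" by linarith
      then show False
      proof cases
        case 1
        then have "sum_split x' a" using sum_split_take[OF split(1) 1] tk eq h len by simp
        with 1 h lx show False unfolding sum_decomposable_def by auto
      next
        case 2
        then have "sum_split x a'" using sum_split_take[OF split(2) 2] tk eq h len by simp
        with 2 h lx show False unfolding sum_decomposable_def by auto
      qed
    qed
    with tk eq have xx: "x = x'" by metis
    with eq lx aa have "map (\<lambda>z. z + a) y = map (\<lambda>z. z + a) y'" unfolding direct_sum_def by simp
    then have "y = y'" by (simp add: inj_map_eq_map inj_on_def)
    with aa xx show ?thesis by simp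
  qed
  then show ?thesis unfolding inj_on_def by auto
qed

lemma sum_indecomposable_take_least_split:
  assumes "sum_split w k" and least: "\<And>k'. 0 < k' \<Longrightarrow> k' < k \<Longrightarrow> \<not> sum_split w k'"
  shows "\<not> sum_decomposable (take k w)"
proof
  assume "sum_decomposable (take k w)"
  then obtain k' where k': "0 < k'" "k' < k" "k' < length w" "sum_split (take k w) k'"
    unfolding sum_decomposable_def by auto
  have "sum_split w k'" unfolding sum_split_def
  proof (intro allI impI)
    fix i j assume ij: "i < k'" "k' \<le> j" "j < length w"
    show "w!i < w!j"
    proof (cases "j < k")
      case True
      with ij k' show ?thesis unfolding sum_split_def by auto
    next
      case False
      with ij k' assms(1) show ?thesis unfolding sum_split_def by auto
    qed
  qed
  with k' least show False by blast
qed

lemma sum_decompositions_image: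
  assumes "0 < n"
  shows "(\<lambda>(a, p). direct_sum (fst p) (snd p)) ` sum_decompositions n = {w \<in> separable_perms n. sum_decomposable w}"
proof
  show "(\<lambda>(a, p). direct_sum (fst p) (snd p)) ` sum_decompositions n \<subseteq> {w \<in> separable_perms n. sum_decomposable w}"
  proof (rule subsetI)
    fix v assume "v \<in> (\<lambda>(a, p). direct_sum (fst p) (snd p)) ` sum_decompositions n"
    then obtain a x y where "(a, x, y) \<in> sum_decompositions n" and v: "v = direct_sum x y" by auto
    then have h: "x \<in> perms a" "y \<in> perms (n - a)" "separable x" "separable y" "0 < a" "a < n"
      unfolding sum_decompositions_def by (auto simp: separable_perms_iff)
    then have p: "direct_sum x y \<in> perms n" using direct_sum_perms[OF h(1,2)] by simp
    moreover have "sum_decomposable (direct_sum x y)" unfolding sum_decomposable_def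
      using sum_split_direct_sum[OF h(1,2)] h length_perms[OF p] by blast
    ultimately show "v \<in> {w \<in> separable_perms n. sum_decomposable w}"
      using separable_direct_sum[OF h(1-4)] v by (simp add: separable_perms_iff)
  qed
next
  show "{w \<in> separable_perms n. sum_decomposable w} \<subseteq> (\<lambda>(a, p). direct_sum (fst p) (snd p)) ` sum_decompositions n"
  proof (rule subsetI)
    fix w assume "w \<in> {w \<in> separable_perms n. sum_decomposable w}"
    then have wp: "w \<in> perms n" "separable w" and dec: "sum_decomposable w"
      by (simp_all add: separable_perms_iff)
    then have lw: "length w = n" using length_perms by auto
    let ?split = "\<lambda>k. 0 < k \<and> k < n \<and> sum_split w k"
    define k where "k = (LEAST k. ?split k)"
    from dec lw have "\<exists>k. ?split k" unfolding sum_decomposable_def by simp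
    then have "?split k" unfolding k_def by (rule LeastI_ex)
    then have k: "0 < k" "k < n" "sum_split w k" by simp_all
    then have "k \<le> n" by simp
    then obtain x y where xy: "x \<in> perms k" "y \<in> perms (n - k)" "w = direct_sum x y"
      "x = take k w" "y = map (\<lambda>z. z - k) (drop k w)"
      by (rule sum_split_direct_sumE[OF wp(1) k(3)])
    have lx: "length x = k" using length_perms[OF xy(1)] .
    have "drop k w = map (\<lambda>z. z + k) y" using xy(3) lx by (simp add: direct_sum_def)
    then have "separable x" "separable y"
      using xy(4) separable_take[OF wp(2)] separable_drop[OF wp(2), of k]
        separable_map_strict_mono[of "\<lambda>z. z + k" y] by (simp_all add: strict_mono_def)
    moreover have "\<not> sum_split w k'" if "0 < k'" "k' < k" for k'
      using not_less_Least[of k' ?split] that k unfolding k_def by auto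
    then have "\<not> sum_decomposable x"
      unfolding xy(4) by (rule sum_indecomposable_take_least_split[OF k(3)])
    ultimately have "(k, x, y) \<in> sum_decompositions n"
      using k xy(1,2) unfolding sum_decompositions_def by (simp add: separable_perms_iff)
    with xy(3) show "w \<in> (\<lambda>(a, p). direct_sum (fst p) (snd p)) ` sum_decompositions n"
      by (intro rev_image_eqI[of "(k, x, y)"]) simp_all
  qed
qed

lemma total_weight_sum_recurrence:
  assumes "0 < n"
  shows "total_weight f L R n = sum_indecomposable_weight f L R n +
    (\<Sum>a = 1..<n. sum_indecomposable_weight f L True a * total_weight f False R (n - a))"
proof -
  let ?A = "{w \<in> separable_perms n. \<not> sum_decomposable w}"
  let ?P = "{w \<in> separable_perms n. sum_decomposable w}"
  let ?I = "\<lambda>a. {x \<in> separable_perms a. \<not> sum_decomposable x}"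
  have "total_weight f L R n = sum (weight f L R) ?A + sum (weight f L R) ?P"
    unfolding total_weight_def using finite_separable_perms
    by (subst sum.union_disjoint[symmetric]) (auto intro: sum.cong)
  also have "sum (weight f L R) ?P =
      (\<Sum>(a, p)\<in>sum_decompositions n. weight f L R (direct_sum (fst p) (snd p)))"
    using sum.reindex_bij_betw[of "\<lambda>(a, p). direct_sum (fst p) (snd p)" "sum_decompositions n" ?P
        "weight f L R"] inj_on_sum_decompositions sum_decompositions_image[OF assms]
    by (simp add: bij_betw_def case_prod_beta)
  also have "\<dots> = (\<Sum>a = 1..<n. \<Sum>p\<in>?I a \<times> separable_perms (n - a).
      weight f L R (direct_sum (fst p) (snd p)))"
    unfolding sum_decompositions_def by (rule sum.Sigma[symmetric]) (auto simp: finite_separable_perms)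
  also have "\<dots> = (\<Sum>a = 1..<n. \<Sum>x\<in>?I a. \<Sum>y\<in>separable_perms (n - a). weight f L R (direct_sum x y))"
    by (simp add: sum.cartesian_product case_prod_beta)
  also have "\<dots> = (\<Sum>a = 1..<n. sum_indecomposable_weight f L True a * total_weight f False R (n - a))"
  proof (rule sum.cong)
    fix a assume a: "a \<in> {1..<n}"
    have "(\<Sum>x\<in>?I a. \<Sum>y\<in>separable_perms (n - a). weight f L R (direct_sum x y)) =
        (\<Sum>x\<in>?I a. \<Sum>y\<in>separable_perms (n - a). weight f L True x * weight f False R y)"
      using a by (intro sum.cong refl) (auto simp: weight_direct_sum separable_perms_iff)
    then show "(\<Sum>x\<in>?I a. \<Sum>y\<in>separable_perms (n - a). weight f L R (direct_sum x y)) =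
        sum_indecomposable_weight f L True a * total_weight f False R (n - a)"
      unfolding sum_indecomposable_weight_def total_weight_def by (simp add: sum_product)
  qed simp
  finally show ?thesis unfolding sum_indecomposable_weight_def by simp
qed

lemma separable_perms_Suc_0: "separable_perms (Suc 0) = {[Suc 0]}"
proof -
  have "separable [Suc 0]" unfolding separable_def by auto
  then show ?thesis by (auto simp: separable_perms_eq)
qed

text \<open>The permutation of length 1 is neither sum- nor skew-decomposable; by
  \<open>separable_decomposable\<close>, every longer separable one is exactly one of the two.\<close>

lemma indecomposable_weights:
  assumes "0 < n"
  shows "sum_indecomposable_weight f L R n + skew_indecomposable_weight f L R n =
    total_weight f L R n + (if n = 1 then f L R else 0)"
proof (cases "n = 1")
  case True
  have "\<not> sum_decomposable [1]" "\<not> skew_decomposable [1]"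
    unfolding sum_decomposable_def skew_decomposable_def by auto
  then have "{w \<in> separable_perms n. \<not> sum_decomposable w} = {[1]}"
    "{w \<in> separable_perms n. \<not> skew_decomposable w} = {[1]}"
    using True by (auto simp: separable_perms_Suc_0)
  moreover have "weight f L R [1] = f L R" unfolding weight_def left_higher_def right_higher_def by simp
  ultimately show ?thesis using True
    unfolding sum_indecomposable_weight_def skew_indecomposable_weight_def total_weight_def
    by (simp add: separable_perms_Suc_0)
next
  case False
  let ?A = "{w \<in> separable_perms n. \<not> sum_decomposable w}"
  let ?B = "{w \<in> separable_perms n. \<not> skew_decomposable w}"
  have "sum_decomposable w \<or> skew_decomposable w" if "w \<in> separable_perms n" for w
    using that assms False separable_decomposable[of w] length_perms[of w n]
    by (auto simp: separable_perms_iff perms_iff)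
  then have "?A \<union> ?B = separable_perms n" "?A \<inter> ?B = {}"
    using not_sum_and_skew_decomposable by blast+
  then have "sum (weight f L R) ?A + sum (weight f L R) ?B = sum (weight f L R) (separable_perms n)"
    using sum.union_disjoint[of ?A ?B "weight f L R"] finite_separable_perms by auto
  with False show ?thesis
    unfolding sum_indecomposable_weight_def skew_indecomposable_weight_def total_weight_def by simp
qed

lemma bij_betw_complement:
  assumes "\<And>w. w \<in> perms n \<Longrightarrow> Q (complement n w) \<longleftrightarrow> P w"
  shows "bij_betw (complement n) {w \<in> separable_perms n. P w} {w \<in> separable_perms n. Q w}"
proof (rule bij_betw_byWitness[where f'="complement n"])
  have "\<forall>w\<in>separable_perms n. complement n (complement n w) = w"
    by (simp add: complement_complement separable_perms_iff)
  then show "\<forall>w\<in>{w \<in> separable_perms n. P w}. complement n (complement n w) = w"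
    "\<forall>w\<in>{w \<in> separable_perms n. Q w}. complement n (complement n w) = w" by auto
  have "complement n w \<in> separable_perms n" if "w \<in> separable_perms n" for w
    using that complement_perms separable_complement by (auto simp: separable_perms_iff)
  moreover have "P (complement n w) \<longleftrightarrow> Q w" if "w \<in> separable_perms n" for w
    using that assms[OF complement_perms] complement_complement by (auto simp: separable_perms_iff)
  ultimately show "complement n ` {w \<in> separable_perms n. P w} \<subseteq> {w \<in> separable_perms n. Q w}"
    "complement n ` {w \<in> separable_perms n. Q w} \<subseteq> {w \<in> separable_perms n. P w}"
    using assms by (auto simp: separable_perms_iff)
qed

lemma total_weight_dual: "total_weight f L R n = total_weight (dual f) (\<not> L) (\<not> R) n"
proof -
  have "total_weight (dual f) (\<not> L) (\<not> R) n = (\<Sum>w\<in>{w \<in> separable_perms n. True}. weight f L R (complement n w))"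
    unfolding total_weight_def by (intro sum.cong) (auto simp: weight_complement separable_perms_iff)
  also have "\<dots> = (\<Sum>w\<in>{w \<in> separable_perms n. True}. weight f L R w)"
    by (rule sum.reindex_bij_betw[OF bij_betw_complement]) simp
  finally show ?thesis unfolding total_weight_def by simp
qed

lemma skew_indecomposable_weight_dual:
  "skew_indecomposable_weight f L R n = sum_indecomposable_weight (dual f) (\<not> L) (\<not> R) n"
proof -
  have "sum_indecomposable_weight (dual f) (\<not> L) (\<not> R) n =
      (\<Sum>w\<in>{w \<in> separable_perms n. \<not> sum_decomposable w}. weight f L R (complement n w))"
    unfolding sum_indecomposable_weight_def
    by (intro sum.cong) (auto simp: weight_complement separable_perms_iff)
  also have "\<dots> = (\<Sum>w\<in>{w \<in> separable_perms n. \<not> skew_decomposable w}. weight f L R w)"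
    by (rule sum.reindex_bij_betw[OF bij_betw_complement]) (simp add: skew_decomposable_complement)
  finally show ?thesis unfolding skew_indecomposable_weight_def by simp
qed

lemma total_weight_skew_recurrence:
  assumes "0 < n"
  shows "total_weight f L R n = skew_indecomposable_weight f L R n +
    (\<Sum>a = 1..<n. skew_indecomposable_weight f L False a * total_weight f True R (n - a))"
  using total_weight_sum_recurrence[OF assms, of "dual f" "\<not> L" "\<not> R"]
  by (simp add: total_weight_dual[of f] skew_indecomposable_weight_dual[of f])

unbundle fps_syntax

section \<open>Generating functions and the cubic equation\<close>

definition ogf :: "(nat \<Rightarrow> 'a::comm_ring_1) \<Rightarrow> 'a fps" where
  "ogf c = Abs_fps (\<lambda>n. if n = 0 then 0 else c n)"

lemma ogf_nth: "ogf c $ n = (if n = 0 then 0 else c n)"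
  by (simp add: ogf_def)

lemma ogf_mult_nth: "(ogf a * ogf b) $ n = (\<Sum>i = 1..<n. a i * b (n - i))"
proof (cases "n = 0")
  case False
  then have "{0..n} = {0, n} \<union> {1..<n}" by auto
  then have "(ogf a * ogf b) $ n = (\<Sum>i\<in>{0, n} \<union> {1..<n}. ogf a $ i * ogf b $ (n - i))"
    by (simp only: fps_mult_nth)
  also have "\<dots> = (\<Sum>i = 1..<n. ogf a $ i * ogf b $ (n - i))"
    using False by (subst sum.union_disjoint) (auto simp: ogf_nth)
  finally show ?thesis by (simp add: ogf_nth)
qed (simp add: ogf_nth)

lemma total_weight_sum_fps:
  "ogf (total_weight f L R) = ogf (sum_indecomposable_weight f L R) +
     ogf (sum_indecomposable_weight f L True) * ogf (total_weight f False R)"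
  by (rule fps_ext) (simp add: ogf_nth ogf_mult_nth total_weight_sum_recurrence)

lemma total_weight_skew_fps:
  "ogf (total_weight f L R) = ogf (skew_indecomposable_weight f L R) +
     ogf (skew_indecomposable_weight f L False) * ogf (total_weight f True R)"
  by (rule fps_ext) (simp add: ogf_nth ogf_mult_nth total_weight_skew_recurrence)

lemma indecomposable_weights_fps:
  "ogf (sum_indecomposable_weight f L R) + ogf (skew_indecomposable_weight f L R) =
     ogf (total_weight f L R) + fps_X * fps_const (f L R)"
  by (rule fps_ext) (auto simp: ogf_nth indecomposable_weights)

text \<open>The recurrences above for the four boundary conditions, with \<open>x\<close> the series variable:
  \<open>s\<close>, \<open>a\<close>, \<open>b\<close> stand for all, sum-indecomposable and skew-indecomposable permutations and
  the index records \<open>L\<close> and \<open>R\<close>.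
  Solving the sum and skew equations for the \<open>a\<close>'s and \<open>b\<close>'s gives \<open>s\<^sub>F\<^sub>F = t s\<^sub>T\<^sub>T\<close>; then
  \<open>s\<^sub>T\<^sub>F + s\<^sub>F\<^sub>T\<close> can be eliminated as a whole, so \<open>u\<close> and \<open>v\<close> survive only as \<open>u + v\<close>.\<close>

lemma cubic_of_decomposition_system:
  fixes sTT sTF sFT sFF aTT aTF aFT aFF bTT bTF bFT bFF x t u v :: "'a::idom fps"
  assumes sum_TT: "sTT = aTT + aTT * sFT" and sum_FT: "sFT = aFT + aFT * sFT"
    and sum_TF: "sTF = aTF + aTT * sFF" and sum_FF: "sFF = aFF + aFT * sFF"
    and skew_TT: "sTT = bTT + bTF * sTT" and skew_TF: "sTF = bTF + bTF * sTF"
    and skew_FT: "sFT = bFT + bFF * sTT" and skew_FF: "sFF = bFF + bFF * sTF"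
    and one_TT: "aTT + bTT = sTT + x" and one_TF: "aTF + bTF = sTF + x * v"
    and one_FT: "aFT + bFT = sFT + x * u" and one_FF: "aFF + bFF = sFF + x * t"
    and "sFT $ 0 = 0" "sTF $ 0 = 0"
  shows "sTT = x + x * (u + v) * sTT + x * t * sTT^2 + t * sTT^3"
proof -
  define P where "P = 1 + sFT"
  define Q where "Q = 1 + sTF"
  have P0: "P $ 0 = 1" and Q0: "Q $ 0 = 1" using assms(13,14) by (simp_all add: P_def Q_def)
  have AP: "aTT * P = sTT" "aFT * P = sFT" using sum_TT sum_FT by (simp_all add: P_def algebra_simps)
  have BQ: "bTF * Q = sTF" "bFF * Q = sFF" using skew_TF skew_FF by (simp_all add: Q_def algebra_simps)
  have "aTT = x + bTF * sTT" using one_TT skew_TT by algebra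
  then have E1: "sTT * Q = x * P * Q + sTF * sTT * P" using AP BQ by algebra
  have "bFF = x * t + aFT * sFF" using one_FF sum_FF by algebra
  then have E2: "sFF * P = x * t * P * Q + sFT * sFF * Q" using AP BQ by algebra
  have "bTF = x * v + aTT * sFF" using one_TF sum_TF by algebra
  then have E3: "sTF * P = x * v * P * Q + sTT * sFF * Q" using AP BQ by algebra
  have "aFT = x * u + bFF * sTT" using one_FT skew_FT by algebra
  then have E4: "sFT * Q = x * u * P * Q + sFF * sTT * P" using AP BQ by algebra
  define D where "D = P + Q - P * Q"
  have "D $ 0 = 1" using P0 Q0 by (simp add: D_def)
  then have "D \<noteq> 0" by auto
  moreover have "sTT * D = x * P * Q" "sFF * D = x * t * P * Q"
    using E1 E2 unfolding D_def P_def Q_def by algebra+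
  ultimately have sFF: "sFF = t * sTT"
    by (metis mult.assoc mult.commute mult_right_cancel)
  define K where "K = P * Q"
  have "K $ 0 = 1" using P0 Q0 by (simp add: K_def)
  then have "K \<noteq> 0" by auto
  moreover have "K * sTT = K * (x + x * (u + v) * sTT + x * t * sTT^2 + t * sTT^3)"
    using E1 E3 E4 unfolding K_def sFF P_def Q_def by algebra
  ultimately show ?thesis by simp
qed

lemma cubic_fps_unique:
  fixes s1 s2 x c t :: "'a::idom fps"
  assumes "s1 = x + x * c * s1 + x * t * s1^2 + t * s1^3" "s2 = x + x * c * s2 + x * t * s2^2 + t * s2^3"
    and "s1 $ 0 = 0" "s2 $ 0 = 0" "x $ 0 = 0"
  shows "s1 = s2"
proof -
  define g where "g = x * c + x * t * (s1 + s2) + t * (s1^2 + s1 * s2 + s2^2)"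
  have "(s1 - s2) * (1 - g) = 0" unfolding g_def using assms(1,2) by algebra
  moreover have "(1 - g) $ 0 = 1" unfolding g_def using assms(3-5) by (simp add: power2_eq_square)
  then have "1 - g \<noteq> 0" by auto
  ultimately show ?thesis by simp
qed

definition pattern_weight :: "int \<Rightarrow> int \<Rightarrow> int \<Rightarrow> letter_weight" where
  "pattern_weight t u v L R = (if L then if R then 1 else v else if R then u else t)"

lemma total_weight_cubic:
  fixes t u v :: int
  defines "s \<equiv> ogf (total_weight (pattern_weight t u v) True True)"
  shows "s = fps_X + fps_X * fps_const (u + v) * s + fps_X * fps_const t * s^2 + fps_const t * s^3"
proof -
  let ?f = "pattern_weight t u v"
  let ?S = "\<lambda>L R. ogf (total_weight ?f L R)"
  let ?A = "\<lambda>L R. ogf (sum_indecomposable_weight ?f L R)"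
  let ?B = "\<lambda>L R. ogf (skew_indecomposable_weight ?f L R)"
  have "?S True True = fps_X + fps_X * (fps_const u + fps_const v) * ?S True True +
      fps_X * fps_const t * (?S True True)^2 + fps_const t * (?S True True)^3"
  proof (rule cubic_of_decomposition_system[where sTF = "?S True False" and sFT = "?S False True"
        and sFF = "?S False False" and aTT = "?A True True" and aTF = "?A True False"
        and aFT = "?A False True" and aFF = "?A False False" and bTT = "?B True True"
        and bTF = "?B True False" and bFT = "?B False True" and bFF = "?B False False"])
    show "?A True True + ?B True True = ?S True True + fps_X"
      "?A True False + ?B True False = ?S True False + fps_X * fps_const v"
      "?A False True + ?B False True = ?S False True + fps_X * fps_const u"
      "?A False False + ?B False False = ?S False False + fps_X * fps_const t"
      by (simp_all add: indecomposable_weights_fps pattern_weight_def)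
    show "?S False True $ 0 = 0" "?S True False $ 0 = 0" by (simp_all add: ogf_nth)
  qed (rule total_weight_sum_fps total_weight_skew_fps)+
  then show ?thesis unfolding s_def by (simp add: fps_const_add)
qed

lemma total_weight_merge_double_ascents_descents:
  assumes "0 < n"
  shows "total_weight (pattern_weight t u v) True True n = total_weight (pattern_weight t (u + v) 0) True True n"
proof -
  have "ogf (total_weight (pattern_weight t u v) True True) = ogf (total_weight (pattern_weight t (u + v) 0) True True)"
    by (rule cubic_fps_unique[OF total_weight_cubic total_weight_cubic[of t "u + v" 0, simplified]])
      (simp_all add: ogf_nth)
  from arg_cong[OF this, of "\<lambda>s. s $ n"] assms show ?thesis by (simp add: ogf_nth)
qed

section \<open>Polynomials with a nonnegative gamma expansion\<close>

definition gamma_basis :: "nat \<Rightarrow> nat \<Rightarrow> int poly" where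
  "gamma_basis m k = monom 1 k * [:1, 1:] ^ (m - 2 * k)"

lemma coeff_one_plus_X_power: "coeff ([:1, 1:] ^ N) j = (of_nat (N choose j) :: int)"
proof (cases "j \<le> N")
  case True
  then show ?thesis using coeff_linear_poly_power[OF True, of "1::int" 1] by simp
next
  case False
  then have "coeff ([:1::int, 1:] ^ N) j = 0" using degree_linear_power[of "1::int" N]
    by (intro coeff_eq_0) simp
  with False show ?thesis by simp
qed

lemma coeff_gamma_basis:
  "coeff (gamma_basis m k) i = (if k \<le> i then of_nat ((m - 2 * k) choose (i - k)) else 0)"
  by (simp add: gamma_basis_def coeff_monom_mult coeff_one_plus_X_power)

lemma degree_gamma_basis_le: "k \<le> m div 2 \<Longrightarrow> degree (gamma_basis m k) \<le> m"
  unfolding gamma_basis_def using degree_mult_le[of "monom (1::int) k" "[:1, 1:] ^ (m - 2 * k)"]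
  by (simp add: degree_monom_eq degree_linear_power)

lemma coeff_gamma_basis_symmetric:
  assumes "k \<le> m div 2" "i \<le> m"
  shows "coeff (gamma_basis m k) i = coeff (gamma_basis m k) (m - i)"
proof -
  consider "k \<le> i" "k \<le> m - i" | "i < k" | "m - i < k" by linarith
  then show ?thesis
  proof cases
    case 1
    then have "(m - 2 * k) choose (i - k) = (m - 2 * k) choose ((m - 2 * k) - (i - k))"
      using assms by (intro binomial_symmetric) linarith
    moreover have "(m - 2 * k) - (i - k) = m - i - k" using 1 assms by linarith
    ultimately show ?thesis using 1 by (simp add: coeff_gamma_basis)
  next
    case 2
    then have "k \<le> m - i" "m - 2 * k < m - i - k" using assms by linarith+
    with 2 show ?thesis by (simp add: coeff_gamma_basis binomial_eq_0)
  next
    case 3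
    then have "k \<le> i" "m - 2 * k < i - k" using assms by linarith+
    with 3 show ?thesis by (simp add: coeff_gamma_basis binomial_eq_0)
  qed
qed

lemma coeff_gamma_basis_increasing:
  assumes "k \<le> m div 2" "i < m div 2"
  shows "coeff (gamma_basis m k) i \<le> coeff (gamma_basis m k) (Suc i)"
proof (cases "k \<le> i")
  case True
  then have "(m - 2 * k) choose (i - k) \<le> (m - 2 * k) choose (Suc i - k)"
    using assms by (intro binomial_mono) linarith+
  with True show ?thesis by (simp add: coeff_gamma_basis)
qed (simp add: coeff_gamma_basis)

lemma coeff_gamma_basis_decreasing:
  assumes "k \<le> m div 2" "m div 2 \<le> i"
  shows "coeff (gamma_basis m k) (Suc i) \<le> coeff (gamma_basis m k) i"
proof -
  have ki: "k \<le> i" using assms by linarith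
  show ?thesis
  proof (cases "Suc i - k \<le> m - 2 * k")
    case True
    then have "(m - 2 * k) choose (Suc i - k) \<le> (m - 2 * k) choose (i - k)"
      using assms ki by (intro binomial_antimono) linarith+
    with ki show ?thesis by (simp add: coeff_gamma_basis)
  next
    case False
    with ki show ?thesis by (simp add: coeff_gamma_basis binomial_eq_0)
  qed
qed

lemma palindromic_gamma_expansion:
  "palindromic (\<Sum>k\<in>{0..m div 2}. smult (g k) (gamma_basis m k)) m"
  unfolding palindromic_def
proof (intro conjI allI impI)
  show "degree (\<Sum>k\<in>{0..m div 2}. smult (g k) (gamma_basis m k)) \<le> m"
    by (intro degree_sum_le order.trans[OF degree_smult_le] degree_gamma_basis_le) auto
  fix i assume "i \<le> m"
  then show "coeff (\<Sum>k\<in>{0..m div 2}. smult (g k) (gamma_basis m k)) i =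
      coeff (\<Sum>k\<in>{0..m div 2}. smult (g k) (gamma_basis m k)) (m - i)"
    by (auto simp: coeff_sum intro!: sum.cong arg_cong[where f="(*) _"] coeff_gamma_basis_symmetric)
qed

text \<open>The peak is at \<open>m div 2\<close>, or at the degree if that is smaller (the sum may vanish).\<close>

lemma unimodal_gamma_expansion:
  assumes "\<And>k. 0 \<le> g k"
  shows "unimodal (\<Sum>k\<in>{0..m div 2}. smult (g k) (gamma_basis m k))"
proof -
  define p where "p = (\<Sum>k\<in>{0..m div 2}. smult (g k) (gamma_basis m k))"
  have coeff_p: "coeff p i = (\<Sum>k\<in>{0..m div 2}. g k * coeff (gamma_basis m k) i)" for i
    by (simp add: p_def coeff_sum)
  have inc: "coeff p i \<le> coeff p (i + 1)" if "i < m div 2" for i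
    unfolding coeff_p using that assms
    by (intro sum_mono mult_left_mono) (simp_all add: coeff_gamma_basis_increasing)
  have dec: "coeff p (i + 1) \<le> coeff p i" if "m div 2 \<le> i" for i
    unfolding coeff_p using that assms
    by (intro sum_mono mult_left_mono) (simp_all add: coeff_gamma_basis_decreasing)
  have "unimodal p" unfolding unimodal_def
  proof (intro exI[of _ "min (m div 2) (degree p)"] conjI allI impI)
    fix i
    show "i < min (m div 2) (degree p) \<Longrightarrow> coeff p i \<le> coeff p (i + 1)" by (rule inc) simp
    show "min (m div 2) (degree p) \<le> i \<and> i < degree p \<Longrightarrow> coeff p (i + 1) \<le> coeff p i"
      by (rule dec) linarith
  qed simp
  then show ?thesis by (simp add: p_def)
qed

section \<open>Descents and double descents\<close>

lemma card_Suc_shift: "card {i \<in> {1..n}. P i} = card {i \<in> {0..<n}. P (Suc i)}"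
proof -
  have "{i \<in> {1..n}. P i} = Suc ` {i \<in> {0..<n}. P (Suc i)}"
  proof (rule set_eqI)
    fix x show "x \<in> {i \<in> {1..n}. P i} \<longleftrightarrow> x \<in> Suc ` {i \<in> {0..<n}. P (Suc i)}"
      by (cases x) auto
  qed
  then show ?thesis by (simp add: card_image)
qed

lemma pval_Suc_less_iff:
  assumes "distinct w" "i < length w"
  shows "pval w (Suc (Suc i)) < pval w (Suc i) \<longleftrightarrow> \<not> right_higher True w i"
proof (cases "Suc i = length w")
  case False
  with assms have "w!Suc i \<noteq> w!i" by (simp add: nth_eq_iff_index_eq)
  with False assms show ?thesis by (auto simp: pval_def right_higher_def)
qed (simp add: pval_def right_higher_def)

lemma pval_less_iff:
  assumes "distinct w" "i < length w"
  shows "pval w (Suc i) < pval w i \<longleftrightarrow> left_higher True w i"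
proof (cases "i = 0")
  case False
  with assms have "w!(i - 1) \<noteq> w!i" by (simp add: nth_eq_iff_index_eq)
  with False assms show ?thesis by (auto simp: pval_def left_higher_def)
qed (use assms in \<open>simp add: pval_def left_higher_def Suc_le_eq\<close>)

lemma des_eq_card: "distinct w \<Longrightarrow> des w = card {i \<in> {0..<length w}. \<not> right_higher True w i}"
  unfolding des_def card_Suc_shift by (intro arg_cong[where f=card]) (auto simp: pval_Suc_less_iff)

lemma dd_eq_card:
  "distinct w \<Longrightarrow> dd w = card {i \<in> {0..<length w}. left_higher True w i \<and> \<not> right_higher True w i}"
  unfolding dd_def card_Suc_shift
  by (intro arg_cong[where f=card]) (auto simp: pval_Suc_less_iff pval_less_iff)

text \<open>Letters with a higher left neighbour are the first letter and those following a descent.\<close>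

lemma card_left_higher:
  assumes "distinct w" "w \<noteq> []"
  shows "card {i \<in> {0..<length w}. left_higher True w i} = Suc (des w)"
proof -
  let ?N = "{i \<in> {0..<length w}. \<not> right_higher True w i}"
  have "{i \<in> {0..<length w}. left_higher True w i} = insert 0 (Suc ` ?N)"
  proof (rule set_eqI)
    fix j
    show "j \<in> {i \<in> {0..<length w}. left_higher True w i} \<longleftrightarrow> j \<in> insert 0 (Suc ` ?N)"
    proof (cases j)
      case (Suc i)
      show ?thesis
      proof (cases "Suc i < length w")
        case True
        with assms(1) have "w!Suc i \<noteq> w!i" by (simp add: nth_eq_iff_index_eq)
        with Suc True show ?thesis by (auto simp: left_higher_def right_higher_def)
      qed (use Suc in \<open>auto simp: right_higher_def\<close>)
    qed (use assms(2) in \<open>simp add: left_higher_def Suc_le_eq\<close>)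
  qed
  then show ?thesis using des_eq_card[OF assms(1)] by (simp add: card_image)
qed

lemma prod_if_const:
  assumes "finite A"
  shows "(\<Prod>i\<in>A. if P i then c else 1) = (c :: 'a::comm_monoid_mult) ^ card {i \<in> A. P i}"
proof -
  have "(\<Prod>i\<in>A. if P i then c else 1) = prod (\<lambda>_. c) (A \<inter> {x. P x}) * prod (\<lambda>_. 1) (A \<inter> - {x. P x})"
    by (rule prod.If_cases[OF assms])
  also have "A \<inter> {x. P x} = {i \<in> A. P i}" by auto
  finally show ?thesis by simp
qed

lemma weight_des:
  assumes "distinct w"
  shows "weight (pattern_weight t 1 t) True True w = t ^ des w"
proof -
  have "weight (pattern_weight t 1 t) True True w =
      (\<Prod>i = 0..<length w. if \<not> right_higher True w i then t else 1)"
    unfolding weight_def by (intro prod.cong) (auto simp: pattern_weight_def)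
  also have "\<dots> = t ^ des w"
    by (simp only: prod_if_const[OF finite_atLeastLessThan] des_eq_card[OF assms])
  finally show ?thesis .
qed

text \<open>Without double descents, the letters followed by a descent are peaks and those with a
  higher left neighbour are valleys; all others are double ascents.\<close>

lemma card_double_ascents:
  assumes "distinct w" "w \<noteq> []" "dd w = 0"
  shows "card {i \<in> {0..<length w}. right_higher True w i \<and> \<not> left_higher True w i} =
      length w - 1 - 2 * des w"
    and "2 * des w + 1 \<le> length w"
proof -
  let ?N = "{i \<in> {0..<length w}. \<not> right_higher True w i}"
  let ?V = "{i \<in> {0..<length w}. left_higher True w i}"
  let ?M = "{i \<in> {0..<length w}. right_higher True w i \<and> \<not> left_higher True w i}"
  have disj: "?N \<inter> ?V = {}" using assms(3) dd_eq_card[OF assms(1)] by auto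
  have "card (?N \<union> ?V \<union> ?M) = card (?N \<union> ?V) + card ?M"
    by (rule card_Un_disjoint) auto
  moreover have "?N \<union> ?V \<union> ?M = {0..<length w}" by auto
  moreover have "card (?N \<union> ?V) = card ?N + card ?V"
    using disj by (intro card_Un_disjoint) auto
  moreover have "card ?N = des w" "card ?V = Suc (des w)"
    using card_left_higher[OF assms(1,2)] des_eq_card[OF assms(1)] by simp_all
  ultimately show "card ?M = length w - 1 - 2 * des w" "2 * des w + 1 \<le> length w" by simp_all
qed

lemma weight_gamma:
  assumes "distinct w" "w \<noteq> []"
  shows "weight (pattern_weight t (1 + t) 0) True True w =
    (if dd w = 0 then t ^ des w * (1 + t) ^ (length w - 1 - 2 * des w) else 0)"
proof (cases "dd w = 0")
  case True
  then have no_dd: "right_higher True w i" if "i < length w" "left_higher True w i" for i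
    using that dd_eq_card[OF assms(1)] by auto
  have "weight (pattern_weight t (1 + t) 0) True True w =
      (\<Prod>i = 0..<length w. (if \<not> right_higher True w i then t else 1) *
        (if right_higher True w i \<and> \<not> left_higher True w i then 1 + t else 1))"
    unfolding weight_def by (intro prod.cong) (auto simp: pattern_weight_def dest: no_dd)
  also have "\<dots> = t ^ card {i \<in> {0..<length w}. \<not> right_higher True w i} *
      (1 + t) ^ card {i \<in> {0..<length w}. right_higher True w i \<and> \<not> left_higher True w i}"
    by (simp only: prod.distrib prod_if_const[OF finite_atLeastLessThan])
  also have "\<dots> = t ^ des w * (1 + t) ^ (length w - 1 - 2 * des w)"
    by (simp only: des_eq_card[OF assms(1), symmetric] card_double_ascents(1)[OF assms True])
  finally show ?thesis using True by simp
next
  case False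
  then have "{i \<in> {0..<length w}. left_higher True w i \<and> \<not> right_higher True w i} \<noteq> {}"
    using dd_eq_card[OF assms(1)] by auto
  then obtain i where "i < length w" "left_higher True w i" "\<not> right_higher True w i" by auto
  then have "weight (pattern_weight t (1 + t) 0) True True w = 0" unfolding weight_def
    by (intro prod_zero) (auto simp: pattern_weight_def intro!: bexI[of _ i])
  with False show ?thesis by simp
qed

section \<open>The gamma expansion of the descent polynomial\<close>

lemma poly_S_poly: "poly (S_poly n) t = total_weight (pattern_weight t 1 t) True True n"
  unfolding S_poly_def total_weight_def poly_sum
  by (intro sum.cong refl) (simp add: poly_monom weight_des separable_perms_iff perms_iff)

lemma total_weight_gamma_expansion:
  assumes "1 \<le> n"
  shows "total_weight (pattern_weight t (1 + t) 0) True True n =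
    (\<Sum>k\<in>{0..(n - 1) div 2}. of_nat (gammaS n k) * (t ^ k * (1 + t) ^ (n - 1 - 2 * k)))"
proof -
  let ?D = "{w \<in> separable_perms n. dd w = 0}"
  have w: "distinct w" "w \<noteq> []" "length w = n" if "w \<in> separable_perms n" for w
    using that assms length_perms[of w n] by (auto simp: separable_perms_iff perms_iff)
  have "total_weight (pattern_weight t (1 + t) 0) True True n =
      (\<Sum>w\<in>separable_perms n. if dd w = 0 then t ^ des w * (1 + t) ^ (n - 1 - 2 * des w) else 0)"
    unfolding total_weight_def by (rule sum.cong[OF refl]) (simp add: weight_gamma w)
  also have "\<dots> = (\<Sum>w\<in>?D. t ^ des w * (1 + t) ^ (n - 1 - 2 * des w))"
    by (rule sum.inter_filter[symmetric, OF finite_separable_perms])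
  also have "\<dots> = (\<Sum>k\<in>{0..(n - 1) div 2}. \<Sum>w\<in>{w \<in> ?D. des w = k}. t ^ des w * (1 + t) ^ (n - 1 - 2 * des w))"
  proof (rule sum.group[symmetric])
    show "des ` ?D \<subseteq> {0..(n - 1) div 2}"
    proof
      fix k assume "k \<in> des ` ?D"
      then obtain w where "w \<in> separable_perms n" "dd w = 0" "k = des w" by auto
      with card_double_ascents(2)[of w] w show "k \<in> {0..(n - 1) div 2}" by auto
    qed
  qed (simp_all add: finite_separable_perms)
  also have "\<dots> = (\<Sum>k\<in>{0..(n - 1) div 2}. of_nat (gammaS n k) * (t ^ k * (1 + t) ^ (n - 1 - 2 * k)))"
  proof (intro sum.cong refl)
    fix k
    have "(\<Sum>w\<in>{w \<in> ?D. des w = k}. t ^ des w * (1 + t) ^ (n - 1 - 2 * des w)) =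
        (\<Sum>w\<in>{w \<in> separable_perms n. dd w = 0 \<and> des w = k}. t ^ k * (1 + t) ^ (n - 1 - 2 * k))"
      by (intro sum.cong) auto
    then show "(\<Sum>w\<in>{w \<in> ?D. des w = k}. t ^ des w * (1 + t) ^ (n - 1 - 2 * des w)) =
        of_nat (gammaS n k) * (t ^ k * (1 + t) ^ (n - 1 - 2 * k))"
      by (simp add: gammaS_def)
  qed
  finally show ?thesis .
qed

lemma S_poly_gamma_expansion:
  assumes "1 \<le> n"
  shows "S_poly n = (\<Sum>k\<in>{0..(n - 1) div 2}. smult (int (gammaS n k)) (gamma_basis (n - 1) k))"
proof -
  have "poly (S_poly n) t =
      poly (\<Sum>k\<in>{0..(n - 1) div 2}. smult (int (gammaS n k)) (gamma_basis (n - 1) k)) t" for t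
  proof -
    have "poly (S_poly n) t = total_weight (pattern_weight t (1 + t) 0) True True n"
      using total_weight_merge_double_ascents_descents[of n t 1 t] assms by (simp add: poly_S_poly)
    also have "\<dots> = (\<Sum>k\<in>{0..(n - 1) div 2}. of_nat (gammaS n k) * (t ^ k * (1 + t) ^ (n - 1 - 2 * k)))"
      using assms by (rule total_weight_gamma_expansion)
    also have "\<dots> = poly (\<Sum>k\<in>{0..(n - 1) div 2}. smult (int (gammaS n k)) (gamma_basis (n - 1) k)) t"
      by (simp add: poly_sum gamma_basis_def poly_monom)
    finally show ?thesis .
  qed
  then show ?thesis by (simp add: poly_eq_poly_eq_iff[symmetric] fun_eq_iff)
qed

theorem theorem1p1:
  fixes n :: nat
  assumes "n \<ge> 1"
  shows "S_poly n = (\<Sum>k\<in>{0..(n - 1) div 2}.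
            smult (int (gammaS n k)) (monom 1 k * [:1, 1:] ^ (n - 1 - 2 * k)))
       \<and> gamma_positive (S_poly n) (n - 1)
       \<and> palindromic (S_poly n) (n - 1)
       \<and> unimodal (S_poly n)"
proof -
  note expansion = S_poly_gamma_expansion[OF assms]
  then have "gamma_positive (S_poly n) (n - 1)"
    unfolding gamma_positive_def gamma_basis_def by (intro exI[of _ "\<lambda>k. int (gammaS n k)"]) simp
  with expansion show ?thesis
    using palindromic_gamma_expansion[of "\<lambda>k. int (gammaS n k)" "n - 1"]
      unimodal_gamma_expansion[of "\<lambda>k. int (gammaS n k)" "n - 1"]
    by (simp add: gamma_basis_def)
qed

end
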